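(* Grant (Lip-Conv) and (Conv), and let $\rho>0$. On the event $$\Omega'_K=\Big\{\forall f\in F\text{ with }P\mathcal L_f\le\rho,\ \exists J\subset\{1,\dots,K\},|J|>K/2,\ \forall k\in J:\ |(P_{B_k}-P)\mathcal L_f|\le\rho/4\Big\},$$ any minmax MOM estimator $\hat f\in\operatorname{argmin}_{f\in F}\sup_{g\in F}\mathrm{MOM}_K(\ell_f-\ell_g)$ satisfies $P\mathcal L_{\hat f}\le\rho$. (In the paper, $\rho=\bar r_2^2(\gamma)$.)
   Context: Setting: $\bar{\mathcal Y}\subset\mathbb R$ convex, $F\subset L_1(\mu)$ a class of measurable functions $\mathcal X\to\bar{\mathcal Y}$, $\bar\ell:\bar{\mathcal Y}\times\mathcal Y\to\mathbb R$, $\ell_f(x,y)=\bar\ell(f(x),y)$, $(X,Y)\sim P$, $X\sim\mu$, $Pg=\mathbb Eg(X,Y)$; $f^*$ unique minimizer of $f\mapsto P\ell_f$ over $F$, $\mathcal L_f=\ell_f-\ell_{f^*}$. (Lip-Conv): there is $L>0$ with $u\mapsto\bar\ell(u,y)$ convex and $L$-Lipschitz for all $y$. (Conv): $F$ convex. Data $(X_i,Y_i)_{i=1}^N$; $K$ divides $N$; blocks $B_1,\dots,B_K$ of size $N/K$ partition $\{1,\dots,N\}$; $P_{B_k}g=\frac KN\sum_{i\in B_k}g(X_i,Y_i)$; $\mathrm{MOM}_K(g)$ = median of $(P_{B_k}g)_k$. *)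

theory Defs
  imports "HOL-Probability.Probability"
begin

definition block_mean :: "(nat \<Rightarrow> 'z) \<Rightarrow> nat \<Rightarrow> nat \<Rightarrow> nat set \<Rightarrow> ('z \<Rightarrow> real) \<Rightarrow> real" where
  "block_mean Z N K B g = real K / real N * (\<Sum>i\<in>B. g (Z i))"

text \<open>Median of K values v 0, ..., v (K-1): the element of (0-based) index K div 2 in the sorted list
  (the usual median for K odd, the upper median for K even).\<close>
definition median_of :: "nat \<Rightarrow> (nat \<Rightarrow> real) \<Rightarrow> real" where
  "median_of K v = sort (map v [0..<K]) ! (K div 2)"

definition MOM :: "(nat \<Rightarrow> 'z) \<Rightarrow> nat \<Rightarrow> nat \<Rightarrow> (nat \<Rightarrow> nat set) \<Rightarrow> ('z \<Rightarrow> real) \<Rightarrow> real" where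
  "MOM Z N K Bs g = median_of K (\<lambda>k. block_mean Z N K (Bs k) g)"

definition loss :: "(real \<Rightarrow> 'y \<Rightarrow> real) \<Rightarrow> ('x \<Rightarrow> real) \<Rightarrow> 'x \<times> 'y \<Rightarrow> real" where
  "loss lbar f z = lbar (f (fst z)) (snd z)"

end

theory Submission
  imports Defs
begin

text \<open>
  If the excess risk of \<open>g\<close> exceeds \<open>\<rho>\<close>, continuity of the risk along the segment from \<open>f\<^sup>*\<close>
  to \<open>g\<close> yields a point \<open>f = f\<^sup>* + \<alpha> (g - f\<^sup>*)\<close>, \<open>0 < \<alpha> \<le> 1\<close>, of excess risk exactly \<open>\<rho>\<close>. On the
  event, more than half of the blocks see an empirical excess loss of \<open>f\<close> of at least \<open>3\<rho>/4\<close>,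
  and convexity of the loss gives \<open>\<L>\<^sub>f \<le> \<alpha> \<L>\<^sub>g \<le> \<L>\<^sub>g\<close> on those blocks; hence
  \<open>MOM\<^sub>K(\<L>\<^sub>g) \<ge> 3\<rho>/4\<close>. Conversely \<open>MOM\<^sub>K(\<ell>\<^sub>f\<^sub>* - \<ell>\<^sub>g) \<le> \<rho>/4\<close> for every \<open>g\<close>, so the minmax
  criterion of \<open>f\<^sup>*\<close> is at most \<open>\<rho>/4\<close>, while that of any \<open>g\<close> with excess risk above \<open>\<rho>\<close> is at
  least \<open>3\<rho>/4\<close>.
\<close>

lemma card_nth_sort_map:
  fixes v :: "nat \<Rightarrow> 'a::linorder"
  shows "card {i. i < K \<and> P (sort (map v [0..<K]) ! i)} = card {i. i < K \<and> P (v i)}"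
proof -
  have "card {i. i < K \<and> P (sort (map v [0..<K]) ! i)} = length (filter P (sort (map v [0..<K])))"
    by (simp add: length_filter_conv_card)
  also have "\<dots> = length (filter P (map v [0..<K]))"
    by (simp add: filter_sort)
  also have "\<dots> = card {i. i < K \<and> P (map v [0..<K] ! i)}"
    by (simp add: length_filter_conv_card)
  also have "\<dots> = card {i. i < K \<and> P (v i)}"
    by (rule arg_cong[where f = card]) auto
  finally show ?thesis .
qed

lemma card_below_median_of: "card {i. i < K \<and> v i < median_of K v} \<le> K div 2"
proof -
  define xs where "xs = sort (map v [0..<K])"
  have "{i. i < K \<and> xs ! i < xs ! (K div 2)} \<subseteq> {..<K div 2}"
  proof
    fix i assume i: "i \<in> {i. i < K \<and> xs ! i < xs ! (K div 2)}"
    then have "i < K div 2"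
      using sorted_nth_mono[of xs "K div 2" i] by (force simp: xs_def)
    then show "i \<in> {..<K div 2}"
      by simp
  qed
  then have "card {i. i < K \<and> xs ! i < xs ! (K div 2)} \<le> K div 2"
    using card_mono[of "{..<K div 2}"] by fastforce
  then show ?thesis
    using card_nth_sort_map[of K "\<lambda>x. x < median_of K v" v] by (simp add: median_of_def xs_def)
qed

lemma card_above_median_of: "card {i. i < K \<and> median_of K v < v i} \<le> K - K div 2 - 1"
proof -
  define xs where "xs = sort (map v [0..<K])"
  have "{i. i < K \<and> xs ! (K div 2) < xs ! i} \<subseteq> {K div 2<..<K}"
  proof
    fix i assume i: "i \<in> {i. i < K \<and> xs ! (K div 2) < xs ! i}"
    then have "K div 2 < i"
      using sorted_nth_mono[of xs i "K div 2"] by (force simp: xs_def)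
    with i show "i \<in> {K div 2<..<K}"
      by simp
  qed
  then have "card {i. i < K \<and> xs ! (K div 2) < xs ! i} \<le> K - K div 2 - 1"
    using card_mono[of "{K div 2<..<K}"] by fastforce
  then show ?thesis
    using card_nth_sort_map[of K "\<lambda>x. median_of K v < x" v] by (simp add: median_of_def xs_def)
qed

lemma median_of_ge_if_majority:
  assumes "J \<subseteq> {..<K}" "K < 2 * card J" "\<forall>k\<in>J. a \<le> v k"
  shows "a \<le> median_of K v"
proof (rule ccontr)
  assume "\<not> a \<le> median_of K v"
  with assms have "J \<subseteq> {i. i < K \<and> median_of K v < v i}"
    by force
  then have "card J \<le> card {i. i < K \<and> median_of K v < v i}"
    by (intro card_mono) auto
  also have "\<dots> \<le> K - K div 2 - 1"
    by (rule card_above_median_of)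
  finally show False using assms(2)
    by linarith
qed

lemma median_of_le_if_majority:
  assumes "J \<subseteq> {..<K}" "K < 2 * card J" "\<forall>k\<in>J. v k \<le> a"
  shows "median_of K v \<le> a"
proof (rule ccontr)
  assume "\<not> median_of K v \<le> a"
  with assms have "J \<subseteq> {i. i < K \<and> v i < median_of K v}"
    by force
  then have "card J \<le> card {i. i < K \<and> v i < median_of K v}"
    by (intro card_mono) auto
  also have "\<dots> \<le> K div 2"
    by (rule card_below_median_of)
  finally show False using assms(2)
    by linarith
qed

lemma block_mean_mono:
  assumes "\<And>z. g z \<le> h z"
  shows "block_mean Z N K B g \<le> block_mean Z N K B h"
  unfolding block_mean_def using assms by (intro mult_left_mono sum_mono) auto

lemma block_mean_cmult: "block_mean Z N K B (\<lambda>z. c * g z) = c * block_mean Z N K B g"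
  unfolding block_mean_def by (simp add: sum_distrib_left algebra_simps)

lemma block_mean_diff_commute:
  "block_mean Z N K B (\<lambda>z. g z - h z) = - block_mean Z N K B (\<lambda>z. h z - g z)"
  unfolding block_mean_def by (simp add: sum_subtractf algebra_simps)

lemma loss_convex_comb_le:
  assumes "\<And>y. convex_on Ybar (\<lambda>u. lbar u y)" "f (fst z) \<in> Ybar" "g (fst z) \<in> Ybar"
    and "0 \<le> t" "t \<le> 1"
  shows "loss lbar (\<lambda>x. (1 - t) * f x + t * g x) z \<le> (1 - t) * loss lbar f z + t * loss lbar g z"
  using convex_onD[OF assms(1)[of "snd z"] assms(4,5,2,3)] by (simp add: loss_def)

lemma integral_loss_diff_le:
  assumes "integrable M (loss lbar f)" "integrable M (loss lbar g)"
    and "integrable M (\<lambda>z. f (fst z) - g (fst z))"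
    and "\<And>x. f x \<in> Ybar" "\<And>x. g x \<in> Ybar"
    and "\<And>y u v. u \<in> Ybar \<Longrightarrow> v \<in> Ybar \<Longrightarrow> \<bar>lbar u y - lbar v y\<bar> \<le> L * \<bar>u - v\<bar>"
  shows "\<bar>integral\<^sup>L M (loss lbar f) - integral\<^sup>L M (loss lbar g)\<bar>
           \<le> L * integral\<^sup>L M (\<lambda>z. \<bar>f (fst z) - g (fst z)\<bar>)"
proof -
  have "\<bar>integral\<^sup>L M (loss lbar f) - integral\<^sup>L M (loss lbar g)\<bar>
      = \<bar>integral\<^sup>L M (\<lambda>z. loss lbar f z - loss lbar g z)\<bar>"
    using Bochner_Integration.integral_diff[OF assms(1,2)] by simp
  also have "\<dots> \<le> integral\<^sup>L M (\<lambda>z. \<bar>loss lbar f z - loss lbar g z\<bar>)"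
    using integral_norm_bound[of M "\<lambda>z. loss lbar f z - loss lbar g z"] by simp
  also have "\<dots> \<le> integral\<^sup>L M (\<lambda>z. L * \<bar>f (fst z) - g (fst z)\<bar>)"
  proof (rule integral_mono)
    show "\<bar>loss lbar f z - loss lbar g z\<bar> \<le> L * \<bar>f (fst z) - g (fst z)\<bar>" for z
      using assms(4-6) by (simp add: loss_def)
    show "integrable M (\<lambda>z. \<bar>loss lbar f z - loss lbar g z\<bar>)"
      using assms(1,2) by (intro integrable_abs Bochner_Integration.integrable_diff)
    show "integrable M (\<lambda>z. L * \<bar>f (fst z) - g (fst z)\<bar>)"
      using assms(3) by (intro integrable_abs integrable_mult_right)
  qed
  also have "\<dots> = L * integral\<^sup>L M (\<lambda>z. \<bar>f (fst z) - g (fst z)\<bar>)"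
    by simp
  finally show ?thesis .
qed

locale convex_lipschitz_risk =
  fixes M :: "('x \<times> 'y) measure" and Ybar :: "real set" and F :: "('x \<Rightarrow> real) set"
    and lbar :: "real \<Rightarrow> 'y \<Rightarrow> real" and L :: real and fstar :: "'x \<Rightarrow> real"
  assumes F_vals: "\<And>f x. f \<in> F \<Longrightarrow> f x \<in> Ybar"
    and F_integrable: "\<And>f. f \<in> F \<Longrightarrow> integrable M (\<lambda>z. f (fst z))"
    and loss_integrable: "\<And>f. f \<in> F \<Longrightarrow> integrable M (loss lbar f)"
    and loss_convex: "\<And>y. convex_on Ybar (\<lambda>u. lbar u y)"
    and loss_lipschitz: "\<And>y u v. u \<in> Ybar \<Longrightarrow> v \<in> Ybar \<Longrightarrow> \<bar>lbar u y - lbar v y\<bar> \<le> L * \<bar>u - v\<bar>"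
    and L_nonneg: "0 \<le> L"
    and F_convex: "\<And>f g t. f \<in> F \<Longrightarrow> g \<in> F \<Longrightarrow> 0 \<le> t \<Longrightarrow> t \<le> 1 \<Longrightarrow>
                     (\<lambda>x. (1 - t) * f x + t * g x) \<in> F"
    and fstar_in: "fstar \<in> F"
    and fstar_min: "\<And>f. f \<in> F \<Longrightarrow> integral\<^sup>L M (loss lbar fstar) \<le> integral\<^sup>L M (loss lbar f)"
begin

definition excess_loss :: "('x \<Rightarrow> real) \<Rightarrow> 'x \<times> 'y \<Rightarrow> real" where
  "excess_loss f = (\<lambda>z. loss lbar f z - loss lbar fstar z)"

lemma integral_excess_loss:
  "f \<in> F \<Longrightarrow> integral\<^sup>L M (excess_loss f) = integral\<^sup>L M (loss lbar f) - integral\<^sup>L M (loss lbar fstar)"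
  unfolding excess_loss_def using loss_integrable fstar_in by simp

lemma excess_risk_nonneg: "f \<in> F \<Longrightarrow> 0 \<le> integral\<^sup>L M (excess_loss f)"
  using integral_excess_loss fstar_min by simp

lemma continuous_on_excess_risk_segment:
  assumes g: "g \<in> F"
  shows "continuous_on {0..1} (\<lambda>t. integral\<^sup>L M (excess_loss (\<lambda>x. (1 - t) * fstar x + t * g x)))"
proof -
  define h where "h t = (\<lambda>x. (1 - t) * fstar x + t * g x)" for t
  have hF: "h t \<in> F" if "t \<in> {0..1}" for t
    using F_convex[OF fstar_in g] that by (simp add: h_def)
  define C where "C = L * integral\<^sup>L M (\<lambda>z. \<bar>g (fst z) - fstar (fst z)\<bar>)"
  have "dist (integral\<^sup>L M (excess_loss (h a))) (integral\<^sup>L M (excess_loss (h b))) \<le> C * dist a b"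
    if "a \<in> {0..1}" "b \<in> {0..1}" for a b
  proof -
    have diff: "h a x - h b x = (a - b) * (g x - fstar x)" for x
      by (simp add: h_def algebra_simps)
    have "\<bar>integral\<^sup>L M (loss lbar (h a)) - integral\<^sup>L M (loss lbar (h b))\<bar>
        \<le> L * integral\<^sup>L M (\<lambda>z. \<bar>h a (fst z) - h b (fst z)\<bar>)"
    proof (rule integral_loss_diff_le[where Ybar = Ybar])
      show "integrable M (\<lambda>z. h a (fst z) - h b (fst z))"
        using F_integrable[OF g] F_integrable[OF fstar_in] by (simp add: diff)
    qed (use that hF loss_integrable F_vals loss_lipschitz in auto)
    also have "\<dots> = C * \<bar>a - b\<bar>"
      by (simp add: C_def diff abs_mult)
    finally show ?thesis
      using that hF by (simp add: dist_real_def integral_excess_loss)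
  qed
  moreover have "0 \<le> C"
    unfolding C_def using L_nonneg by simp
  ultimately have "continuous_on {0..1} (\<lambda>t. integral\<^sup>L M (excess_loss (h t)))"
    by (intro lipschitz_on_continuous_on lipschitz_onI)
  then show ?thesis
    by (simp add: h_def)
qed

lemma exists_segment_point_excess_risk_eq:
  assumes g: "g \<in> F" and rho: "0 < \<rho>" "\<rho> < integral\<^sup>L M (excess_loss g)"
  obtains t where "0 < t" "t \<le> 1"
    "integral\<^sup>L M (excess_loss (\<lambda>x. (1 - t) * fstar x + t * g x)) = \<rho>"
proof -
  let ?risk = "\<lambda>t. integral\<^sup>L M (excess_loss (\<lambda>x. (1 - t) * fstar x + t * g x))"
  have "?risk 0 = 0" "?risk 1 = integral\<^sup>L M (excess_loss g)"
    by (simp_all add: excess_loss_def)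
  then obtain t where t: "0 \<le> t" "t \<le> 1" "?risk t = \<rho>"
    using IVT'[of ?risk 0 \<rho> 1, OF _ _ _ continuous_on_excess_risk_segment[OF g]] rho
    by auto
  moreover have "t \<noteq> 0"
    using t(3) rho(1) by (auto simp: excess_loss_def)
  ultimately show ?thesis
    by (intro that) auto
qed

end

locale mom_good_blocks = convex_lipschitz_risk M Ybar F lbar L fstar
  for M :: "('x \<times> 'y) measure" and Ybar F lbar L fstar +
  fixes Z :: "nat \<Rightarrow> 'x \<times> 'y" and N K :: nat and Bs :: "nat \<Rightarrow> nat set" and \<rho> :: real
  assumes rho_pos: "0 < \<rho>"
    and good_blocks: "\<And>f. f \<in> F \<Longrightarrow> integral\<^sup>L M (excess_loss f) \<le> \<rho> \<Longrightarrow>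
          \<exists>J\<subseteq>{..<K}. K < 2 * card J \<and>
            (\<forall>k\<in>J. \<bar>block_mean Z N K (Bs k) (excess_loss f) - integral\<^sup>L M (excess_loss f)\<bar> \<le> \<rho> / 4)"
begin

lemma majority_blocks_excess_ge:
  assumes g: "g \<in> F" and large: "\<rho> < integral\<^sup>L M (excess_loss g)"
  obtains J where "J \<subseteq> {..<K}" "K < 2 * card J"
    "\<forall>k\<in>J. 3 * \<rho> / 4 \<le> block_mean Z N K (Bs k) (excess_loss g)"
proof -
  obtain t where t: "0 < t" "t \<le> 1"
    and risk: "integral\<^sup>L M (excess_loss (\<lambda>x. (1 - t) * fstar x + t * g x)) = \<rho>"
    using exists_segment_point_excess_risk_eq[OF g rho_pos large] .
  have "(\<lambda>x. (1 - t) * fstar x + t * g x) \<in> F"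
    using F_convex[OF fstar_in g] t by simp
  then obtain J where J: "J \<subseteq> {..<K}" "K < 2 * card J" and near:
    "\<forall>k\<in>J. \<bar>block_mean Z N K (Bs k) (excess_loss (\<lambda>x. (1 - t) * fstar x + t * g x)) - \<rho>\<bar> \<le> \<rho> / 4"
    using good_blocks[of "\<lambda>x. (1 - t) * fstar x + t * g x"] risk by auto
  have pointwise: "excess_loss (\<lambda>x. (1 - t) * fstar x + t * g x) z \<le> t * excess_loss g z" for z
    using loss_convex_comb_le[OF loss_convex, of fstar z g t] F_vals[OF fstar_in] F_vals[OF g] t
    by (simp add: excess_loss_def algebra_simps)
  have "3 * \<rho> / 4 \<le> block_mean Z N K (Bs k) (excess_loss g)" if "k \<in> J" for k
  proof -
    have "3 * \<rho> / 4 \<le> block_mean Z N K (Bs k) (excess_loss (\<lambda>x. (1 - t) * fstar x + t * g x))"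
      using bspec[OF near that] by linarith
    also have "\<dots> \<le> block_mean Z N K (Bs k) (\<lambda>z. t * excess_loss g z)"
      by (rule block_mean_mono[OF pointwise])
    also have "\<dots> = t * block_mean Z N K (Bs k) (excess_loss g)"
      by (rule block_mean_cmult)
    finally have scaled: "3 * \<rho> / 4 \<le> t * block_mean Z N K (Bs k) (excess_loss g)" .
    then have "0 < t * block_mean Z N K (Bs k) (excess_loss g)"
      using rho_pos by linarith
    then have "0 < block_mean Z N K (Bs k) (excess_loss g)"
      using t(1) by (rule zero_less_mult_pos)
    with scaled show ?thesis
      using mult_left_le_one_le[of "block_mean Z N K (Bs k) (excess_loss g)" t] t by linarith
  qed
  with J that show ?thesis
    by blast
qed

lemma majority_blocks_excess_lower_bound:
  assumes g: "g \<in> F"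
  obtains J where "J \<subseteq> {..<K}" "K < 2 * card J"
    "\<forall>k\<in>J. - (\<rho> / 4) \<le> block_mean Z N K (Bs k) (excess_loss g)"
proof (cases "integral\<^sup>L M (excess_loss g) \<le> \<rho>")
  case True
  then obtain J where "J \<subseteq> {..<K}" "K < 2 * card J"
    "\<forall>k\<in>J. \<bar>block_mean Z N K (Bs k) (excess_loss g) - integral\<^sup>L M (excess_loss g)\<bar> \<le> \<rho> / 4"
    using good_blocks[OF g True] by blast
  moreover have "- (\<rho> / 4) \<le> block_mean Z N K (Bs k) (excess_loss g)" if "k \<in> J" for k
    using bspec[OF calculation(3) that] excess_risk_nonneg[OF g] unfolding abs_le_iff by linarith
  ultimately show ?thesis
    using that by blast
next
  case False
  then have "\<rho> < integral\<^sup>L M (excess_loss g)"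
    by simp
  then obtain J where "J \<subseteq> {..<K}" "K < 2 * card J"
    "\<forall>k\<in>J. 3 * \<rho> / 4 \<le> block_mean Z N K (Bs k) (excess_loss g)"
    by (rule majority_blocks_excess_ge[OF g])
  moreover have "- (\<rho> / 4) \<le> block_mean Z N K (Bs k) (excess_loss g)" if "k \<in> J" for k
    using bspec[OF calculation(3) that] rho_pos by simp
  ultimately show ?thesis
    using that by blast
qed

lemma MOM_excess_loss_ge:
  assumes "g \<in> F" "\<rho> < integral\<^sup>L M (excess_loss g)"
  shows "3 * \<rho> / 4 \<le> MOM Z N K Bs (excess_loss g)"
proof -
  obtain J where "J \<subseteq> {..<K}" "K < 2 * card J"
    "\<forall>k\<in>J. 3 * \<rho> / 4 \<le> block_mean Z N K (Bs k) (excess_loss g)"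
    by (rule majority_blocks_excess_ge[OF assms])
  then show ?thesis
    unfolding MOM_def by (rule median_of_ge_if_majority)
qed

lemma MOM_fstar_criterion_le:
  assumes "g \<in> F"
  shows "MOM Z N K Bs (\<lambda>z. loss lbar fstar z - loss lbar g z) \<le> \<rho> / 4"
proof -
  obtain J where "J \<subseteq> {..<K}" "K < 2 * card J"
    "\<forall>k\<in>J. - (\<rho> / 4) \<le> block_mean Z N K (Bs k) (excess_loss g)"
    using majority_blocks_excess_lower_bound[OF assms] .
  then show ?thesis
    unfolding MOM_def excess_loss_def
    by (intro median_of_le_if_majority[of J]) (auto simp: block_mean_diff_commute[of _ _ _ _ "loss lbar fstar"])
qed

theorem minmax_MOM_excess_risk_le:
  assumes fhat: "fhat \<in> F"
    and criterion: "(SUP g\<in>F. ereal (MOM Z N K Bs (\<lambda>z. loss lbar fhat z - loss lbar g z)))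
          \<le> (SUP g\<in>F. ereal (MOM Z N K Bs (\<lambda>z. loss lbar fstar z - loss lbar g z)))"
  shows "integral\<^sup>L M (excess_loss fhat) \<le> \<rho>"
proof (rule ccontr)
  assume "\<not> ?thesis"
  then have "ereal (3 * \<rho> / 4) \<le> ereal (MOM Z N K Bs (excess_loss fhat))"
    using MOM_excess_loss_ge[OF fhat] by simp
  also have "\<dots> \<le> (SUP g\<in>F. ereal (MOM Z N K Bs (\<lambda>z. loss lbar fhat z - loss lbar g z)))"
    using SUP_upper[OF fstar_in] by (simp add: excess_loss_def)
  also have "\<dots> \<le> (SUP g\<in>F. ereal (MOM Z N K Bs (\<lambda>z. loss lbar fstar z - loss lbar g z)))"
    by (rule criterion)
  also have "\<dots> \<le> ereal (\<rho> / 4)"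
    using MOM_fstar_criterion_le by (simp add: SUP_least)
  finally show False
    using rho_pos by simp
qed

end

theorem lemma5:
  fixes M :: "('x \<times> 'y) measure" and MX :: "'x measure" and MY :: "'y measure"
    and Ybar :: "real set" and F :: "('x \<Rightarrow> real) set"
    and lbar :: "real \<Rightarrow> 'y \<Rightarrow> real" and L :: real
    and fstar fhat :: "'x \<Rightarrow> real"
    and Z :: "nat \<Rightarrow> 'x \<times> 'y" and N K :: nat and Bs :: "nat \<Rightarrow> nat set" and \<rho> :: real
  assumes P: "prob_space M" and sets_M: "sets M = sets (MX \<Otimes>\<^sub>M MY)"
    and Ybar_convex: "convex Ybar"
    and F_vals: "\<And>f x. f \<in> F \<Longrightarrow> f x \<in> Ybar"
    and F_meas: "\<And>f. f \<in> F \<Longrightarrow> f \<in> borel_measurable MX"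
    and F_L1: "\<And>f. f \<in> F \<Longrightarrow> integrable (distr M MX fst) f"
    and loss_int: "\<And>f. f \<in> F \<Longrightarrow> integrable M (loss lbar f)"
    and L_pos: "L > 0"
    and lip_conv: "\<And>y. convex_on Ybar (\<lambda>u. lbar u y)"
    and lip: "\<And>y u v. u \<in> Ybar \<Longrightarrow> v \<in> Ybar \<Longrightarrow> \<bar>lbar u y - lbar v y\<bar> \<le> L * \<bar>u - v\<bar>"
    and F_convex: "\<And>f g t. f \<in> F \<Longrightarrow> g \<in> F \<Longrightarrow> 0 \<le> t \<Longrightarrow> t \<le> 1 \<Longrightarrow>
                     (\<lambda>x. (1 - t) * f x + t * g x) \<in> F"
    and fstar_in: "fstar \<in> F"
    and fstar_min: "\<And>f. f \<in> F \<Longrightarrow> integral\<^sup>L M (loss lbar fstar) \<le> integral\<^sup>L M (loss lbar f)"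
    and fstar_unique: "\<And>f. f \<in> F \<Longrightarrow> integral\<^sup>L M (loss lbar f) = integral\<^sup>L M (loss lbar fstar) \<Longrightarrow> f = fstar"
    and N_pos: "0 < N" and K_pos: "0 < K" and K_dvd: "K dvd N"
    and blocks_sub: "\<And>k. k < K \<Longrightarrow> Bs k \<subseteq> {..<N}"
    and blocks_card: "\<And>k. k < K \<Longrightarrow> card (Bs k) = N div K"
    and blocks_disj: "\<And>k j. k < K \<Longrightarrow> j < K \<Longrightarrow> k \<noteq> j \<Longrightarrow> Bs k \<inter> Bs j = {}"
    and blocks_cover: "(\<Union>k<K. Bs k) = {..<N}"
    and rho_pos: "\<rho> > 0"
    and event: "\<forall>f\<in>F. integral\<^sup>L M (\<lambda>z. loss lbar f z - loss lbar fstar z) \<le> \<rho> \<longrightarrow>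
                   (\<exists>J\<subseteq>{..<K}. 2 * card J > K \<and>
                      (\<forall>k\<in>J. \<bar>block_mean Z N K (Bs k) (\<lambda>z. loss lbar f z - loss lbar fstar z)
                               - integral\<^sup>L M (\<lambda>z. loss lbar f z - loss lbar fstar z)\<bar> \<le> \<rho> / 4))"
    and fhat_in: "fhat \<in> F"
    and fhat_argmin: "\<And>f. f \<in> F \<Longrightarrow>
        (SUP g\<in>F. ereal (MOM Z N K Bs (\<lambda>z. loss lbar fhat z - loss lbar g z)))
          \<le> (SUP g\<in>F. ereal (MOM Z N K Bs (\<lambda>z. loss lbar f z - loss lbar g z)))"
  shows "integral\<^sup>L M (\<lambda>z. loss lbar fhat z - loss lbar fstar z) \<le> \<rho>"
proof -
  have fst_measurable: "fst \<in> measurable M MX"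
    using measurable_fst[of MX MY] by (simp add: measurable_cong_sets[OF sets_M refl])
  have F_integrable: "integrable M (\<lambda>z. f (fst z))" if "f \<in> F" for f
    using F_L1[OF that] integrable_distr_eq[OF fst_measurable F_meas[OF that]] by simp
  interpret convex_lipschitz_risk M Ybar F lbar L fstar
    using F_vals F_integrable loss_int lip_conv lip L_pos F_convex fstar_in fstar_min
    by unfold_locales auto
  have good_blocks: "\<exists>J\<subseteq>{..<K}. K < 2 * card J \<and>
      (\<forall>k\<in>J. \<bar>block_mean Z N K (Bs k) (excess_loss f) - integral\<^sup>L M (excess_loss f)\<bar> \<le> \<rho> / 4)"
    if "f \<in> F" "integral\<^sup>L M (excess_loss f) \<le> \<rho>" for f
    using that unfolding excess_loss_def by (rule event[rule_format])
  interpret mom_good_blocks M Ybar F lbar L fstar Z N K Bs \<rho>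
    by (intro mom_good_blocks.intro convex_lipschitz_risk_axioms mom_good_blocks_axioms.intro
        rho_pos good_blocks)
  show ?thesis
    using minmax_MOM_excess_risk_le[OF fhat_in fhat_argmin[OF fstar_in]]
    unfolding excess_loss_def .
qed

end
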